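(* Let $\mathcal{D}=\{(x_i,a_i,y_i)\}_{i=1}^N$ be a dataset with $a_i\in\{1,2\}$, $y_i\in\{0,1\}$, and let $\mathcal{R}$ be a group-aware Bayes-optimal score (GABOS) function with respect to $\mathcal{D}$. Let the loss $\mathcal{L}$ be the misclassification error on $\mathcal{D}$ of the (normalized) thresholding of $\mathcal{R}$, and let the bias $\mathcal{B}$ be the demographic-parity bias or the equal-opportunity bias on $\mathcal{D}$. Then the post-processing method applied to $\mathcal{R}$ is slack-consistent: for every individual $(x,a)$, the prediction $f_\beta(x,a)$ of the returned classifier is monotonic in the slack $\beta>0$.
   Context: GABOS function: $\mathcal{R}$ is group-aware Bayes-optimal with respect to $\mathcal{D}$ if for every $(x,a)$ appearing in $\mathcal{D}$, $\mathcal{R}(x,a)$ equals the empirical probability that $(x,a)$ is labeled positively in $\mathcal{D}$, i.e. $\mathcal{R}(x,a)=|\{i: x_i=x,a_i=a,y_i=1\}|/|\{i:x_i=x,a_i=a\}|$. A (stochastic) classifier $f$ gives probability $f(x,a)\in[0,1]$ of a positive prediction. Demographic-parity bias: $\mathcal{B}(f)=\frac{\sum_i f(x_i,a_i)\mathbb{1}[a_i=1]}{\sum_i\mathbb{1}[a_i=1]}-\frac{\sum_i f(x_i,a_i)\mathbb{1}[a_i=2]}{\sum_i\mathbb{1}[a_i=2]}$. Equal-opportunity bias: the same with the additional restriction $y_i=1$ in every indicator. Normalized thresholds: for group $a$, a normalized threshold $\tau\in[0,1]$ denotes a threshold classifier on $\mathcal{R}(x,a)$ in group $a$, randomized over at most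 two adjacent deterministic thresholds, whose positive prediction rate in group $a$ (on $\mathcal{D}$) equals $1-\tau$. A pair $(\tau_1,\tau_2)$ defines a classifier (group $a$ uses $\tau_a$) with loss $\mathcal{L}(\tau_1,\tau_2)$ and bias $\mathcal{B}(\tau_1,\tau_2)$. Post-processing method with slack $\beta>0$: among all $(\tau_1,\tau_2)\in[0,1]^2$ minimizing $\mathcal{L}(\tau_1,\tau_2)$ subject to $|\mathcal{B}(\tau_1,\tau_2)|\le\beta$, keep those with smallest $|\mathcal{B}|$; among those the ones with smallest $\tau_1$; among those return the one with smallest $\tau_2$. The resulting classifier is $f_\beta$. Slack-consistency: for every individual $(x,a)$ and all $\beta_1<\beta_2<\beta_3$, either $f_{\beta_1}(x,a)\le f_{\beta_2}(x,a)\le f_{\beta_3}(x,a)$ or $f_{\beta_1}(x,a)\ge f_{\beta_2}(x,a)\ge f_{\beta_3}(x,a)$. *)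

theory Defs
  imports Complex_Main
begin

type_synonym 'x dataset = "('x \<times> nat \<times> nat) list"

definition dx :: "'x dataset \<Rightarrow> nat \<Rightarrow> 'x" where "dx D i = fst (D ! i)"
definition da :: "'x dataset \<Rightarrow> nat \<Rightarrow> nat" where "da D i = fst (snd (D ! i))"
definition dy :: "'x dataset \<Rightarrow> nat \<Rightarrow> nat" where "dy D i = snd (snd (D ! i))"

definition gabos :: "'x dataset \<Rightarrow> ('x \<Rightarrow> nat \<Rightarrow> real) \<Rightarrow> bool" where
  "gabos D R \<longleftrightarrow> (\<forall>i < length D.
     R (dx D i) (da D i) =
       real (card {j. j < length D \<and> dx D j = dx D i \<and> da D j = da D i \<and> dy D j = 1})
     / real (card {j. j < length D \<and> dx D j = dx D i \<and> da D j = da D i}))"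

text \<open>It thresholds the score R(x,a) within group a and randomizes
  only on the single boundary score level (i.e. it is the mixture of two adjacent deterministic
  thresholds), chosen so that the fraction of group a predicted positive on D is 1 - tau:
  with n_a the group size, m = (1 - tau) n_a the target number of positives,
  above(s) = number of group-a points with score > s, at(s) = number with score = s,
  the prediction probability is min 1 (max 0 ((m - above(s)) / at(s))).\<close>
definition grp_size :: "'x dataset \<Rightarrow> nat \<Rightarrow> nat" where
  "grp_size D a = card {i. i < length D \<and> da D i = a}"

definition nthr :: "'x dataset \<Rightarrow> ('x \<Rightarrow> nat \<Rightarrow> real) \<Rightarrow> nat \<Rightarrow> real \<Rightarrow> real \<Rightarrow> real" where
  "nthr D R a \<tau> s =
     (let m = (1 - \<tau>) * real (grp_size D a);
          above = real (card {i. i < length D \<and> da D i = a \<and> R (dx D i) a > s});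
          atl = real (card {i. i < length D \<and> da D i = a \<and> R (dx D i) a = s})
      in min 1 (max 0 ((m - above) / atl)))"

definition clf :: "'x dataset \<Rightarrow> ('x \<Rightarrow> nat \<Rightarrow> real) \<Rightarrow> real \<times> real \<Rightarrow> 'x \<Rightarrow> nat \<Rightarrow> real" where
  "clf D R \<tau> x a = nthr D R a (if a = 1 then fst \<tau> else snd \<tau>) (R x a)"

definition loss :: "'x dataset \<Rightarrow> ('x \<Rightarrow> nat \<Rightarrow> real) \<Rightarrow> real \<times> real \<Rightarrow> real" where
  "loss D R \<tau> =
     (\<Sum>i<length D. (let f = clf D R \<tau> (dx D i) (da D i) in
        if dy D i = 1 then 1 - f else f)) / real (length D)"

datatype bias_kind = DemParity | EqOpportunity

definition bias :: "bias_kind \<Rightarrow> 'x dataset \<Rightarrow> ('x \<Rightarrow> nat \<Rightarrow> real) \<Rightarrow> real \<times> real \<Rightarrow> real" where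
  "bias k D R \<tau> =
     (let sel = (\<lambda>i. k = DemParity \<or> dy D i = 1);
          f = (\<lambda>i. clf D R \<tau> (dx D i) (da D i));
          rate = (\<lambda>a. (\<Sum>i | i < length D \<and> da D i = a \<and> sel i. f i)
                        / real (card {i. i < length D \<and> da D i = a \<and> sel i}))
      in rate 1 - rate 2)"

definition pp_feasible :: "bias_kind \<Rightarrow> 'x dataset \<Rightarrow> ('x \<Rightarrow> nat \<Rightarrow> real) \<Rightarrow> real \<Rightarrow> real \<times> real \<Rightarrow> bool" where
  "pp_feasible k D R \<beta> \<tau> \<longleftrightarrow> fst \<tau> \<in> {0..1} \<and> snd \<tau> \<in> {0..1} \<and> \<bar>bias k D R \<tau>\<bar> \<le> \<beta>"

definition pp_minloss :: "bias_kind \<Rightarrow> 'x dataset \<Rightarrow> ('x \<Rightarrow> nat \<Rightarrow> real) \<Rightarrow> real \<Rightarrow> real \<times> real \<Rightarrow> bool" where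
  "pp_minloss k D R \<beta> \<tau> \<longleftrightarrow> pp_feasible k D R \<beta> \<tau> \<and>
     (\<forall>\<sigma>. pp_feasible k D R \<beta> \<sigma> \<longrightarrow> loss D R \<tau> \<le> loss D R \<sigma>)"

definition pp_minbias :: "bias_kind \<Rightarrow> 'x dataset \<Rightarrow> ('x \<Rightarrow> nat \<Rightarrow> real) \<Rightarrow> real \<Rightarrow> real \<times> real \<Rightarrow> bool" where
  "pp_minbias k D R \<beta> \<tau> \<longleftrightarrow> pp_minloss k D R \<beta> \<tau> \<and>
     (\<forall>\<sigma>. pp_minloss k D R \<beta> \<sigma> \<longrightarrow> \<bar>bias k D R \<tau>\<bar> \<le> \<bar>bias k D R \<sigma>\<bar>)"

definition pp_min1 :: "bias_kind \<Rightarrow> 'x dataset \<Rightarrow> ('x \<Rightarrow> nat \<Rightarrow> real) \<Rightarrow> real \<Rightarrow> real \<times> real \<Rightarrow> bool" where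
  "pp_min1 k D R \<beta> \<tau> \<longleftrightarrow> pp_minbias k D R \<beta> \<tau> \<and>
     (\<forall>\<sigma>. pp_minbias k D R \<beta> \<sigma> \<longrightarrow> fst \<tau> \<le> fst \<sigma>)"

definition postproc :: "bias_kind \<Rightarrow> 'x dataset \<Rightarrow> ('x \<Rightarrow> nat \<Rightarrow> real) \<Rightarrow> real \<Rightarrow> real \<times> real \<Rightarrow> bool" where
  "postproc k D R \<beta> \<tau> \<longleftrightarrow> pp_min1 k D R \<beta> \<tau> \<and>
     (\<forall>\<sigma>. pp_min1 k D R \<beta> \<sigma> \<longrightarrow> snd \<tau> \<le> snd \<sigma>)"

end

theory Submission
  imports Defs
begin

text \<open>For a fixed group, thresholding a GABOS score gives a convex trade-off between the
  loss and the positive rate of the group: by the intermediate value theorem every convex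
  combination of two attainable rates is attained by some threshold, and since a GABOS score
  equals the empirical probability of a positive label, the threshold classifier has the most
  true positives among all fractional selections of the same size, so its loss is at most the
  convex combination of the two losses.

  The post-processing problem is therefore separable: loss L1 t1 + L2 t2 and bias B1 t1 - B2 t2
  with antitone convex trade-offs (Li, Bi). For such a problem, if the bias constraint of the
  selection at slack \<beta> is not binding, a larger slack selects the same pair; if it is binding,
  the bias selected for a larger slack lies further out on the same side. Hence the selected
  biases move monotonically in \<beta>. Finally, an exchange argument between two selected pairs
  shows that the selected thresholds are ordered by their biases (a larger bias comes with a
  smaller first and a larger second threshold), so every individual's prediction is monotone
  in \<beta>.\<close>

section \<open>Convex loss-bias trade-offs\<close>

definition convex_tradeoff :: "(real \<Rightarrow> real) \<Rightarrow> (real \<Rightarrow> real) \<Rightarrow> bool" where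
  "convex_tradeoff L B \<longleftrightarrow> (\<forall>a\<in>{0..1}. \<forall>b\<in>{0..1}. \<forall>\<theta>\<in>{0..1}. \<exists>t\<in>{0..1}.
     B t = \<theta> * B a + (1 - \<theta>) * B b \<and> L t \<le> \<theta> * L a + (1 - \<theta>) * L b)"

lemma convex_tradeoffD:
  assumes "convex_tradeoff L B" "a \<in> {0..1}" "b \<in> {0..1}" "\<theta> \<in> {0..1}"
  obtains t where "t \<in> {0..1}" "B t = \<theta> * B a + (1 - \<theta>) * B b"
    "L t \<le> \<theta> * L a + (1 - \<theta>) * L b"
  using assms unfolding convex_tradeoff_def by blast

lemma convex_tradeoff_exchange:
  assumes tradeoff: "convex_tradeoff L B" and a: "a \<in> {0..1}" and d: "d \<in> {0..1}"
    and "B a \<le> b" "b \<le> B d" and sum: "b + c = B a + B d"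
  obtains tb tc where "tb \<in> {0..1}" "tc \<in> {0..1}" "B tb = b" "B tc = c"
    "L tb + L tc \<le> L a + L d" "b = B a \<Longrightarrow> tb = a"
proof (cases "b = B a")
  case True
  then show ?thesis using that[of a d] a d sum by simp
next
  case False
  with assms have lt: "B a < B d" by linarith
  define \<theta> where "\<theta> = (B d - b) / (B d - B a)"
  have \<theta>: "\<theta> \<in> {0..1}" "1 - \<theta> \<in> {0..1}"
    using lt assms by (auto simp: \<theta>_def field_simps)
  have "\<theta> * (B d - B a) = B d - b"
    using lt by (simp add: \<theta>_def)
  then have b: "b = \<theta> * B a + (1 - \<theta>) * B d"
    and c: "c = (1 - \<theta>) * B a + (1 - (1 - \<theta>)) * B d"
    using sum by (simp_all add: algebra_simps)
  obtain tb where "tb \<in> {0..1}" "B tb = b" "L tb \<le> \<theta> * L a + (1 - \<theta>) * L d"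
    using convex_tradeoffD[OF tradeoff a d \<theta>(1)] b by metis
  moreover obtain tc where "tc \<in> {0..1}" "B tc = c" "L tc \<le> (1 - \<theta>) * L a + (1 - (1 - \<theta>)) * L d"
    using convex_tradeoffD[OF tradeoff a d \<theta>(2)] c by metis
  ultimately show ?thesis
    using that[of tb tc] False by (simp add: algebra_simps)
qed

section \<open>Lexicographic post-processing\<close>

lemma segment_avoiding_interval:
  fixes a b :: real
  assumes avoid: "\<And>\<theta>. \<theta> \<in> {0..1} \<Longrightarrow> \<bar>a\<bar> \<le> \<bar>\<theta> * a + (1 - \<theta>) * b\<bar>"
  shows "\<bar>a\<bar> \<le> \<bar>b\<bar>" "0 \<le> a * b"
proof -
  show "\<bar>a\<bar> \<le> \<bar>b\<bar>" using avoid[of 0] by simp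
  show "0 \<le> a * b"
  proof (rule ccontr)
    assume neg: "\<not> 0 \<le> a * b"
    define \<theta> where "\<theta> = b / (b - a)"
    have "a < 0 \<and> 0 < b \<or> b < 0 \<and> 0 < a"
      using neg by (auto simp: zero_le_mult_iff)
    then have "\<theta> \<in> {0..1}" and "\<theta> * a + (1 - \<theta>) * b = 0"
      by (auto simp: \<theta>_def field_simps)
    then show False using avoid[of \<theta>] neg by simp
  qed
qed

lemma is_arg_min_le:
  fixes f :: "'a \<Rightarrow> 'b::linorder"
  shows "is_arg_min f P x \<Longrightarrow> P y \<Longrightarrow> f x \<le> f y"
  by (simp add: is_arg_min_linorder)

lemma is_arg_min_swap:
  fixes f :: "'a \<Rightarrow> 'b::linorder"
  assumes "is_arg_min f P x" "is_arg_min f Q y" "P y" "Q x"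
  shows "is_arg_min f P y" "is_arg_min f Q x" "f x = f y"
proof -
  have "f x \<le> f y" "f y \<le> f x"
    using assms by (simp_all add: is_arg_min_le)
  then show "is_arg_min f P y" "is_arg_min f Q x" "f x = f y"
    using assms by (auto intro: is_arg_min_antimono)
qed

definition slack_feasible :: "(real \<times> real \<Rightarrow> real) \<Rightarrow> real \<Rightarrow> real \<times> real \<Rightarrow> bool" where
  "slack_feasible B \<beta> \<tau> \<longleftrightarrow> \<tau> \<in> {0..1} \<times> {0..1} \<and> \<bar>B \<tau>\<bar> \<le> \<beta>"

definition min_loss :: "(real \<times> real \<Rightarrow> real) \<Rightarrow> (real \<times> real \<Rightarrow> real) \<Rightarrow> real \<Rightarrow> real \<times> real \<Rightarrow> bool" where
  "min_loss L B \<beta> = is_arg_min L (slack_feasible B \<beta>)"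

definition min_bias :: "(real \<times> real \<Rightarrow> real) \<Rightarrow> (real \<times> real \<Rightarrow> real) \<Rightarrow> real \<Rightarrow> real \<times> real \<Rightarrow> bool" where
  "min_bias L B \<beta> = is_arg_min (\<lambda>\<tau>. \<bar>B \<tau>\<bar>) (min_loss L B \<beta>)"

definition min_fst :: "(real \<times> real \<Rightarrow> real) \<Rightarrow> (real \<times> real \<Rightarrow> real) \<Rightarrow> real \<Rightarrow> real \<times> real \<Rightarrow> bool" where
  "min_fst L B \<beta> = is_arg_min fst (min_bias L B \<beta>)"

definition lex_select :: "(real \<times> real \<Rightarrow> real) \<Rightarrow> (real \<times> real \<Rightarrow> real) \<Rightarrow> real \<Rightarrow> real \<times> real \<Rightarrow> bool" where
  "lex_select L B \<beta> = is_arg_min snd (min_fst L B \<beta>)"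

lemma postproc_iff_lex_select: "postproc k D R \<beta> \<tau> \<longleftrightarrow> lex_select (loss D R) (bias k D R) \<beta> \<tau>"
proof -
  have "pp_feasible k D R \<beta> = slack_feasible (bias k D R) \<beta>"
    by (auto simp: fun_eq_iff pp_feasible_def slack_feasible_def)
  then have "pp_minloss k D R \<beta> = min_loss (loss D R) (bias k D R) \<beta>"
    by (simp add: fun_eq_iff pp_minloss_def min_loss_def is_arg_min_linorder)
  then have "pp_minbias k D R \<beta> = min_bias (loss D R) (bias k D R) \<beta>"
    by (simp add: fun_eq_iff pp_minbias_def min_bias_def is_arg_min_linorder)
  then have "pp_min1 k D R \<beta> = min_fst (loss D R) (bias k D R) \<beta>"
    by (simp add: fun_eq_iff pp_min1_def min_fst_def is_arg_min_linorder)
  then show ?thesis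
    by (simp add: postproc_def lex_select_def is_arg_min_linorder)
qed

lemma lex_selectD:
  assumes "lex_select L B \<beta> x"
  shows "min_fst L B \<beta> x" "min_bias L B \<beta> x" "min_loss L B \<beta> x"
    and "x \<in> {0..1} \<times> {0..1}" "\<bar>B x\<bar> \<le> \<beta>"
  using assms
  by (simp_all add: lex_select_def min_fst_def min_bias_def min_loss_def is_arg_min_def
      slack_feasible_def)

lemma lex_select_minimal:
  assumes x: "lex_select L B \<beta> x"
  shows "slack_feasible B \<beta> z \<Longrightarrow> L x \<le> L z"
    and "min_loss L B \<beta> z \<Longrightarrow> \<bar>B x\<bar> \<le> \<bar>B z\<bar>"
    and "min_bias L B \<beta> z \<Longrightarrow> fst x \<le> fst z"
    and "min_fst L B \<beta> z \<Longrightarrow> snd x \<le> snd z"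
proof -
  note minimal = lex_selectD[OF x, unfolded min_fst_def min_bias_def min_loss_def]
  show "slack_feasible B \<beta> z \<Longrightarrow> L x \<le> L z" by (rule is_arg_min_le[OF minimal(3)])
  show "min_loss L B \<beta> z \<Longrightarrow> \<bar>B x\<bar> \<le> \<bar>B z\<bar>"
    by (rule is_arg_min_le[OF minimal(2)]) (simp add: min_loss_def)
  show "min_bias L B \<beta> z \<Longrightarrow> fst x \<le> fst z"
    by (rule is_arg_min_le[OF minimal(1)]) (simp add: min_bias_def min_loss_def)
  show "min_fst L B \<beta> z \<Longrightarrow> snd x \<le> snd z"
    by (rule is_arg_min_le[OF x[unfolded lex_select_def]])
qed

lemma lex_select_tieI:
  assumes x: "lex_select L B \<beta> x"
  shows "slack_feasible B \<beta> z \<Longrightarrow> L z \<le> L x \<Longrightarrow> min_loss L B \<beta> z"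
    and "min_loss L B \<beta> z \<Longrightarrow> \<bar>B z\<bar> \<le> \<bar>B x\<bar> \<Longrightarrow> min_bias L B \<beta> z"
    and "min_bias L B \<beta> z \<Longrightarrow> fst z \<le> fst x \<Longrightarrow> min_fst L B \<beta> z"
  using is_arg_min_antimono lex_selectD(1-3)[OF x]
  by (simp_all add: min_loss_def min_bias_def min_fst_def)

lemma lex_select_loss_antimono:
  assumes "lex_select L B \<beta> x" "lex_select L B \<beta>' y" "\<beta> \<le> \<beta>'"
  shows "L y \<le> L x"
  using assms lex_selectD(4,5)[OF assms(1)]
  by (intro lex_select_minimal(1)[OF assms(2)]) (simp add: slack_feasible_def)

lemma lex_select_unique:
  assumes x: "lex_select L B \<beta> x" and y: "lex_select L B \<beta>' y"
    and "min_loss L B \<beta> y" "min_loss L B \<beta>' x"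
  shows "x = y"
proof -
  have "min_bias L B \<beta> y" "min_bias L B \<beta>' x"
    using is_arg_min_swap(1,2)[OF lex_selectD(2)[OF x, unfolded min_bias_def]
        lex_selectD(2)[OF y, unfolded min_bias_def] assms(3,4)]
    by (simp_all add: min_bias_def)
  then have "min_fst L B \<beta> y" "min_fst L B \<beta>' x" "fst x = fst y"
    using is_arg_min_swap[OF lex_selectD(1)[OF x, unfolded min_fst_def]
        lex_selectD(1)[OF y, unfolded min_fst_def]]
    by (simp_all add: min_fst_def)
  then have "snd x = snd y"
    using is_arg_min_swap(3)[OF x[unfolded lex_select_def] y[unfolded lex_select_def]]
    by (simp add: min_fst_def)
  with \<open>fst x = fst y\<close> show ?thesis by (simp add: prod_eq_iff)
qed

lemma lex_select_exchange:
  assumes x: "lex_select L B \<beta>x x" and y: "lex_select L B \<beta>y y"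
    and box: "w \<in> {0..1} \<times> {0..1}" "z \<in> {0..1} \<times> {0..1}"
    and bias: "B w = B x" "B z = B y" and loss: "L w + L z \<le> L x + L y"
  shows "min_bias L B \<beta>x w" "min_bias L B \<beta>y z"
proof -
  have feasible: "slack_feasible B \<beta>x w" "slack_feasible B \<beta>y z"
    using lex_selectD(5)[OF x] lex_selectD(5)[OF y] box bias by (simp_all add: slack_feasible_def)
  then have "L x \<le> L w" "L y \<le> L z"
    by (simp_all add: lex_select_minimal(1)[OF x] lex_select_minimal(1)[OF y])
  with loss have "min_loss L B \<beta>x w" "min_loss L B \<beta>y z"
    using feasible by (simp_all add: lex_select_tieI(1)[OF x] lex_select_tieI(1)[OF y])
  then show "min_bias L B \<beta>x w" "min_bias L B \<beta>y z"
    using bias by (simp_all add: lex_select_tieI(2)[OF x] lex_select_tieI(2)[OF y])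
qed

locale separable_tradeoff =
  fixes L B :: "real \<times> real \<Rightarrow> real" and L1 L2 B1 B2 :: "real \<Rightarrow> real"
  assumes L_split: "L \<tau> = L1 (fst \<tau>) + L2 (snd \<tau>)"
    and B_split: "B \<tau> = B1 (fst \<tau>) - B2 (snd \<tau>)"
    and tradeoff1: "convex_tradeoff L1 B1" and tradeoff2: "convex_tradeoff L2 B2"
    and antimono1: "antimono_on {0..1} B1" and antimono2: "antimono_on {0..1} B2"
begin

lemma convex_tradeoff_pairs:
  assumes "x \<in> {0..1} \<times> {0..1}" "y \<in> {0..1} \<times> {0..1}" "\<theta> \<in> {0..1}"
  obtains z where "z \<in> {0..1} \<times> {0..1}" "B z = \<theta> * B x + (1 - \<theta>) * B y"
    "L z \<le> \<theta> * L x + (1 - \<theta>) * L y"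
proof -
  obtain t1 where "t1 \<in> {0..1}" "B1 t1 = \<theta> * B1 (fst x) + (1 - \<theta>) * B1 (fst y)"
      "L1 t1 \<le> \<theta> * L1 (fst x) + (1 - \<theta>) * L1 (fst y)"
    using convex_tradeoffD[OF tradeoff1] assms by (metis mem_Times_iff)
  moreover obtain t2 where "t2 \<in> {0..1}" "B2 t2 = \<theta> * B2 (snd x) + (1 - \<theta>) * B2 (snd y)"
      "L2 t2 \<le> \<theta> * L2 (snd x) + (1 - \<theta>) * L2 (snd y)"
    using convex_tradeoffD[OF tradeoff2] assms by (metis mem_Times_iff)
  ultimately show ?thesis
    using that[of "(t1, t2)"] by (simp add: L_split B_split algebra_simps)
qed

lemma lex_select_fst_antitone:
  assumes x: "lex_select L B \<beta>x x" and y: "lex_select L B \<beta>y y" and "B y \<le> B x"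
  shows "fst x \<le> fst y"
proof (rule ccontr)
  assume "\<not> fst x \<le> fst y"
  note box = lex_selectD(4)[OF x] lex_selectD(4)[OF y]
  have "B1 (fst x) \<le> B1 (fst y)"
    using monotone_onD[OF antimono1] box \<open>\<not> fst x \<le> fst y\<close> by auto
  \<comment> \<open>swap the first thresholds and repair both biases inside group 2\<close>
  then have "B2 (snd x) \<le> B1 (fst y) - B x" "B1 (fst y) - B x \<le> B2 (snd y)"
    "(B1 (fst y) - B x) + (B1 (fst x) - B y) = B2 (snd x) + B2 (snd y)"
    using assms(3) by (simp_all add: B_split)
  then obtain t t' where t: "t \<in> {0..1}" "t' \<in> {0..1}"
      "B2 t = B1 (fst y) - B x" "B2 t' = B1 (fst x) - B y"
      "L2 t + L2 t' \<le> L2 (snd x) + L2 (snd y)"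
    using convex_tradeoff_exchange[OF tradeoff2] box by (metis mem_Times_iff)
  have "min_bias L B \<beta>x (fst y, t)"
    using lex_select_exchange(1)[OF x y, of "(fst y, t)" "(fst x, t')"] box t
    by (simp add: mem_Times_iff L_split B_split)
  then have "fst x \<le> fst y"
    using lex_select_minimal(3)[OF x] by fastforce
  with \<open>\<not> fst x \<le> fst y\<close> show False ..
qed

lemma lex_select_snd_mono:
  assumes x: "lex_select L B \<beta>x x" and y: "lex_select L B \<beta>y y" and "B y \<le> B x"
  shows "snd y \<le> snd x"
proof (rule ccontr)
  assume "\<not> snd y \<le> snd x"
  note box = lex_selectD(4)[OF x] lex_selectD(4)[OF y]
  have B2_le: "B2 (snd y) \<le> B2 (snd x)"
    using monotone_onD[OF antimono2] box \<open>\<not> snd y \<le> snd x\<close> by auto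
  then have "B1 (fst y) \<le> B2 (snd x) + B y" "B2 (snd x) + B y \<le> B1 (fst x)"
    "(B2 (snd x) + B y) + (B2 (snd y) + B x) = B1 (fst y) + B1 (fst x)"
    using assms(3) by (simp_all add: B_split)
  then obtain t t' where t: "t \<in> {0..1}" "t' \<in> {0..1}"
      "B1 t = B2 (snd x) + B y" "B1 t' = B2 (snd y) + B x"
      "L1 t + L1 t' \<le> L1 (fst y) + L1 (fst x)"
      "B2 (snd x) + B y = B1 (fst y) \<Longrightarrow> t = fst y"
    using convex_tradeoff_exchange[OF tradeoff1] box by (metis mem_Times_iff)
  have w: "min_bias L B \<beta>y (t, snd x)"
    using lex_select_exchange(1)[OF y x, of "(t, snd x)" "(t', snd y)"] box t
    by (simp add: mem_Times_iff L_split B_split)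
  then have "fst y \<le> t"
    using lex_select_minimal(3)[OF y] by fastforce
  \<comment> \<open>since B1 is antitone, the exchange cannot move the first threshold of y\<close>
  then have "B1 t \<le> B1 (fst y)"
    using monotone_onD[OF antimono1, of "fst y" t] box t(1) by (simp add: mem_Times_iff)
  then have "t = fst y"
    using B2_le t(3,6) by (simp add: B_split)
  then have "min_fst L B \<beta>y (t, snd x)"
    using lex_select_tieI(3)[OF y w] by simp
  then have "snd y \<le> snd x"
    using lex_select_minimal(4)[OF y] by fastforce
  with \<open>\<not> snd y \<le> snd x\<close> show False ..
qed

lemma lex_select_loss_le_bias_beyond:
  assumes x: "lex_select L B \<beta> x" and y: "y \<in> {0..1} \<times> {0..1}" and "L y \<le> L x"
  shows "\<bar>B x\<bar> \<le> \<bar>B y\<bar>" and "0 \<le> B x * B y"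
proof -
  note x_box = lex_selectD(4)[OF x]
  have avoid: "\<bar>B x\<bar> \<le> \<bar>\<theta> * B x + (1 - \<theta>) * B y\<bar>" if \<theta>: "\<theta> \<in> {0..1}" for \<theta>
  proof -
    obtain z where z: "z \<in> {0..1} \<times> {0..1}" "B z = \<theta> * B x + (1 - \<theta>) * B y"
        "L z \<le> \<theta> * L x + (1 - \<theta>) * L y"
      using convex_tradeoff_pairs[OF x_box y \<theta>] .
    have "\<theta> * L x + (1 - \<theta>) * L y \<le> L x"
      using \<theta> \<open>L y \<le> L x\<close> by (intro convex_bound_le) auto
    with z(3) have "L z \<le> L x" by linarith
    show ?thesis
    proof (cases "\<bar>B z\<bar> \<le> \<beta>")
      case True
      then have "slack_feasible B \<beta> z" using z(1) by (simp add: slack_feasible_def)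
      then have "min_loss L B \<beta> z" using lex_select_tieI(1)[OF x] \<open>L z \<le> L x\<close> by simp
      then have "\<bar>B x\<bar> \<le> \<bar>B z\<bar>" by (rule lex_select_minimal(2)[OF x])
      with z(2) show ?thesis by simp
    next
      case False
      then show ?thesis using lex_selectD(5)[OF x] z(2) by simp
    qed
  qed
  show "\<bar>B x\<bar> \<le> \<bar>B y\<bar>" "0 \<le> B x * B y"
    using segment_avoiding_interval[OF avoid] by auto
qed

lemma lex_select_inactive_slack:
  assumes x: "lex_select L B \<beta> x" and y: "lex_select L B \<beta>' y"
    and "\<beta> \<le> \<beta>'" and inactive: "\<bar>B x\<bar> < \<beta>"
  shows "y = x"
proof -
  note x_box = lex_selectD(4)[OF x] and y_box = lex_selectD(4)[OF y]
  have "L y \<le> L x" using lex_select_loss_antimono[OF x y \<open>\<beta> \<le> \<beta>'\<close>] .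
  have "L x \<le> L y"
  proof (rule ccontr)
    assume "\<not> L x \<le> L y"
    \<comment> \<open>moving from x towards y by the fraction \<theta> uses up exactly the unused slack\<close>
    define \<theta> where "\<theta> = (\<beta> - \<bar>B x\<bar>) / (\<beta>' - \<bar>B x\<bar>)"
    have \<theta>: "0 < \<theta>" "\<theta> \<in> {0..1}" "\<theta> * (\<beta>' - \<bar>B x\<bar>) = \<beta> - \<bar>B x\<bar>"
      using inactive \<open>\<beta> \<le> \<beta>'\<close> by (auto simp: \<theta>_def field_simps)
    obtain z where z: "z \<in> {0..1} \<times> {0..1}" "B z = \<theta> * B y + (1 - \<theta>) * B x"
        "L z \<le> \<theta> * L y + (1 - \<theta>) * L x"
      using convex_tradeoff_pairs[OF y_box x_box \<theta>(2)] .
    have "\<bar>B z\<bar> \<le> \<theta> * \<bar>B y\<bar> + (1 - \<theta>) * \<bar>B x\<bar>"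
      using z(2) \<theta> abs_triangle_ineq[of "\<theta> * B y" "(1 - \<theta>) * B x"] by (simp add: abs_mult)
    also have "\<dots> \<le> \<theta> * \<beta>' + (1 - \<theta>) * \<bar>B x\<bar>"
      using lex_selectD(5)[OF y] \<theta> by (simp add: mult_left_mono)
    also have "\<dots> = \<beta>" using \<theta>(3) by (simp add: algebra_simps)
    finally have "slack_feasible B \<beta> z" using z(1) by (simp add: slack_feasible_def)
    then have "L x \<le> L z" by (rule lex_select_minimal(1)[OF x])
    moreover have "\<theta> * L y < \<theta> * L x" using \<theta> \<open>\<not> L x \<le> L y\<close> by simp
    ultimately show False using z(3) by (simp add: algebra_simps)
  qed
  have "slack_feasible B \<beta>' x"
    using x_box lex_selectD(5)[OF x] \<open>\<beta> \<le> \<beta>'\<close> by (simp add: slack_feasible_def)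
  then have "min_loss L B \<beta>' x" using lex_select_tieI(1)[OF y] \<open>L x \<le> L y\<close> by simp
  moreover from this have "\<bar>B y\<bar> \<le> \<bar>B x\<bar>" by (rule lex_select_minimal(2)[OF y])
  then have "min_loss L B \<beta> y"
    using lex_select_tieI(1)[OF x] y_box inactive \<open>L y \<le> L x\<close> by (simp add: slack_feasible_def)
  ultimately show "y = x" by (rule lex_select_unique[OF y x])
qed

lemma lex_select_bias_step:
  assumes x: "lex_select L B \<beta> x" and y: "lex_select L B \<beta>' y" and "\<beta> \<le> \<beta>'"
  shows "B y = B x \<or> (B x = - \<beta> \<and> B y \<le> B x) \<or> (B x = \<beta> \<and> B x \<le> B y)"
proof (cases "\<bar>B x\<bar> < \<beta>")
  case True
  then show ?thesis using lex_select_inactive_slack[OF x y \<open>\<beta> \<le> \<beta>'\<close>] by simp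
next
  case False
  then have "\<bar>B x\<bar> = \<beta>" using lex_selectD(5)[OF x] by simp
  have "\<bar>B x\<bar> \<le> \<bar>B y\<bar>" "0 \<le> B x * B y"
    using lex_select_loss_le_bias_beyond[OF x lex_selectD(4)[OF y]]
      lex_select_loss_antimono[OF x y \<open>\<beta> \<le> \<beta>'\<close>] by simp_all
  then show ?thesis using \<open>\<bar>B x\<bar> = \<beta>\<close> by (auto simp: zero_le_mult_iff abs_if split: if_splits)
qed

lemma lex_select_slack_consistent:
  assumes "0 \<le> \<beta>1" "\<beta>1 \<le> \<beta>2" "\<beta>2 \<le> \<beta>3"
    and x1: "lex_select L B \<beta>1 x1" and x2: "lex_select L B \<beta>2 x2" and x3: "lex_select L B \<beta>3 x3"
  shows "(fst x1 \<le> fst x2 \<and> fst x2 \<le> fst x3 \<and> snd x3 \<le> snd x2 \<and> snd x2 \<le> snd x1) \<or>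
         (fst x3 \<le> fst x2 \<and> fst x2 \<le> fst x1 \<and> snd x1 \<le> snd x2 \<and> snd x2 \<le> snd x3)"
proof -
  have "(B x1 \<le> B x2 \<and> B x2 \<le> B x3) \<or> (B x2 \<le> B x1 \<and> B x3 \<le> B x2)"
    using lex_select_bias_step[OF x1 x2] lex_select_bias_step[OF x2 x3] assms(1-3) by auto
  then show ?thesis
    using lex_select_fst_antitone lex_select_snd_mono x1 x2 x3 by blast
qed

end

section \<open>Threshold classifiers of a GABOS score\<close>

lemma convex_comb_ge:
  fixes u v w \<theta> :: real
  assumes "\<theta> \<in> {0..1}" "u \<le> v" "u \<le> w"
  shows "u \<le> \<theta> * v + (1 - \<theta>) * w"
proof -
  have "\<theta> * u \<le> \<theta> * v" "(1 - \<theta>) * u \<le> (1 - \<theta>) * w"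
    using assms by (simp_all add: mult_left_mono)
  then show ?thesis by (simp add: algebra_simps)
qed

lemma antitone_interpolation:
  fixes Q T :: "real \<Rightarrow> real"
  assumes cont: "continuous_on {0..1} Q" "continuous_on {0..1} T"
    and anti: "antimono_on {0..1} Q" "antimono_on {0..1} T"
    and ab: "a \<in> {0..1}" "b \<in> {0..1}" and \<theta>: "\<theta> \<in> {0..1}"
    and concave: "\<And>t. t \<in> {0..1} \<Longrightarrow> Q t = \<theta> * Q a + (1 - \<theta>) * Q b \<Longrightarrow>
      \<theta> * T a + (1 - \<theta>) * T b \<le> T t"
  shows "\<exists>t\<in>{0..1}. Q t = \<theta> * Q a + (1 - \<theta>) * Q b \<and> \<theta> * T a + (1 - \<theta>) * T b \<le> T t"
    and "\<exists>t\<in>{0..1}. T t = \<theta> * T a + (1 - \<theta>) * T b \<and> Q t \<le> \<theta> * Q a + (1 - \<theta>) * Q b"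
proof -
  define q where "q = \<theta> * Q a + (1 - \<theta>) * Q b"
  define r where "r = \<theta> * T a + (1 - \<theta>) * T b"
  define lo where "lo = min a b"
  define hi where "hi = max a b"
  have bounds: "lo \<in> {0..1}" "hi \<in> {0..1}" "lo \<le> a" "lo \<le> b" "a \<le> hi" "b \<le> hi" "lo \<le> hi"
    using ab by (auto simp: lo_def hi_def)
  have "Q hi \<le> q" "q \<le> Q lo" "T hi \<le> r"
    using monotone_onD[OF anti(1)] monotone_onD[OF anti(2)] ab bounds \<theta>
    by (auto simp: q_def r_def intro!: convex_comb_ge convex_bound_le)
  moreover have "continuous_on {lo..hi} Q"
    by (rule continuous_on_subset[OF cont(1)]) (use bounds in auto)
  ultimately obtain s where s: "lo \<le> s" "s \<le> hi" "Q s = q"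
    using IVT2'[of Q hi q lo] \<open>lo \<le> hi\<close> by blast
  then have s01: "s \<in> {0..1}" using bounds by auto
  with s(3) have "r \<le> T s" using concave by (simp add: q_def r_def)
  then show "\<exists>t\<in>{0..1}. Q t = q \<and> r \<le> T t" using s01 s(3) by blast
  have "continuous_on {s..hi} T"
    by (rule continuous_on_subset[OF cont(2)]) (use s01 bounds in auto)
  then obtain t where t: "s \<le> t" "t \<le> hi" "T t = r"
    using IVT2'[of T hi r s] \<open>T hi \<le> r\<close> \<open>r \<le> T s\<close> s(2) by auto
  then have "t \<in> {0..1}" using s01 bounds by auto
  moreover have "Q t \<le> q" using monotone_onD[OF anti(1) s01 \<open>t \<in> {0..1}\<close> t(1)] s(3) by simp
  ultimately show "\<exists>t\<in>{0..1}. T t = r \<and> Q t \<le> q" using t(3) by blast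
qed

lemma threshold_maximizes_weighted_sum:
  fixes r f z :: "'i \<Rightarrow> real"
  assumes "finite G"
    and threshold: "\<And>i j. i \<in> G \<Longrightarrow> j \<in> G \<Longrightarrow> r j < r i \<Longrightarrow> f i = 1 \<or> f j = 0"
    and z: "\<And>i. i \<in> G \<Longrightarrow> 0 \<le> z i \<and> z i \<le> 1"
    and same_sum: "sum z G = sum f G"
  shows "(\<Sum>i\<in>G. r i * z i) \<le> (\<Sum>i\<in>G. r i * f i)"
proof -
  define d where "d i = f i - z i" for i
  have sum_d: "sum d G = 0" using same_sum by (simp add: d_def sum_subtractf)
  obtain c where c: "\<And>i. i \<in> G \<Longrightarrow> 0 < d i \<Longrightarrow> c \<le> r i"
    "\<And>i. i \<in> G \<Longrightarrow> d i < 0 \<Longrightarrow> r i \<le> c"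
  proof (cases "\<exists>j\<in>G. 0 < d j")
    case True
    then obtain j where j: "j \<in> G" "0 < d j" "\<And>i. i \<in> G \<Longrightarrow> 0 < d i \<Longrightarrow> r j \<le> r i"
      using ex_is_arg_min_if_finite[of "{j\<in>G. 0 < d j}" r] \<open>finite G\<close>
      by (auto simp: is_arg_min_linorder)
    have "r i \<le> r j" if "i \<in> G" "d i < 0" for i
      using threshold[of i j] z that j by (force simp: d_def)
    then show ?thesis using that[of "r j"] j(3) by blast
  next
    case False
    then have "\<forall>i\<in>G. - d i = 0"
      using sum_nonneg_eq_0_iff[OF \<open>finite G\<close>, of "\<lambda>i. - d i"] sum_d
      by (force simp: sum_negf)
    then show ?thesis using that[of 0] by force
  qed
  have "0 \<le> (\<Sum>i\<in>G. (r i - c) * d i)"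
  proof (rule sum_nonneg)
    fix i assume "i \<in> G"
    then show "0 \<le> (r i - c) * d i"
      using c[of i] by (cases "0 < d i"; cases "d i < 0") (auto intro: mult_nonpos_nonpos)
  qed
  also have "(\<Sum>i\<in>G. (r i - c) * d i) = (\<Sum>i\<in>G. r i * f i) - (\<Sum>i\<in>G. r i * z i)"
    using sum_d by (simp add: d_def algebra_simps sum_subtractf sum.distrib sum_distrib_left[symmetric])
  finally show ?thesis by simp
qed

lemma sum_filter_class_average:
  fixes \<kappa> :: "'i \<Rightarrow> 'k" and h :: "'k \<Rightarrow> real"
  assumes fin: "finite G"
    and w: "\<And>i. i \<in> G \<Longrightarrow>
      w i = real (card {j\<in>G. \<kappa> j = \<kappa> i \<and> P j}) / real (card {j\<in>G. \<kappa> j = \<kappa> i})"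
  shows "(\<Sum>i\<in>{i\<in>G. P i}. h (\<kappa> i)) = (\<Sum>i\<in>G. w i * h (\<kappa> i))"
proof -
  have per_class: "(\<Sum>i\<in>{i\<in>G. \<kappa> i = c \<and> P i}. h (\<kappa> i)) = (\<Sum>i\<in>{i\<in>G. \<kappa> i = c}. w i * h (\<kappa> i))"
    if "c \<in> \<kappa> ` G" for c
  proof -
    let ?C = "{i\<in>G. \<kappa> i = c}" and ?C1 = "{i\<in>G. \<kappa> i = c \<and> P i}"
    have "card ?C \<noteq> 0" using that fin by auto
    have "(\<Sum>i\<in>?C1. h (\<kappa> i)) = real (card ?C1) * h c" by simp
    also have "\<dots> = (\<Sum>i\<in>?C. real (card ?C1) / real (card ?C) * h c)"
      using \<open>card ?C \<noteq> 0\<close> by simp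
    also have "\<dots> = (\<Sum>i\<in>?C. w i * h (\<kappa> i))" by (rule sum.cong) (auto simp: w)
    finally show ?thesis .
  qed
  have "(\<Sum>i\<in>{i\<in>G. P i}. h (\<kappa> i)) = (\<Sum>i\<in>G. if P i then h (\<kappa> i) else 0)"
    using fin by (simp add: sum.inter_filter)
  also have "\<dots> = (\<Sum>c\<in>\<kappa> ` G. \<Sum>i\<in>{i\<in>G. \<kappa> i = c}. if P i then h (\<kappa> i) else 0)"
    by (rule sum.image_gen[OF fin])
  also have "\<dots> = (\<Sum>c\<in>\<kappa> ` G. \<Sum>i\<in>{i\<in>G. \<kappa> i = c \<and> P i}. h (\<kappa> i))"
    using fin by (simp add: sum.inter_filter[symmetric] conj_assoc)
  also have "\<dots> = (\<Sum>c\<in>\<kappa> ` G. \<Sum>i\<in>{i\<in>G. \<kappa> i = c}. w i * h (\<kappa> i))"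
    using per_class by simp
  also have "\<dots> = (\<Sum>i\<in>G. w i * h (\<kappa> i))"
    by (rule sum.image_gen[OF fin, symmetric])
  finally show ?thesis .
qed

definition group_members :: "'x dataset \<Rightarrow> nat \<Rightarrow> nat set" where
  "group_members D a = {i. i < length D \<and> da D i = a}"

definition positives :: "'x dataset \<Rightarrow> nat \<Rightarrow> nat set" where
  "positives D a = {i \<in> group_members D a. dy D i = 1}"

definition pred :: "'x dataset \<Rightarrow> ('x \<Rightarrow> nat \<Rightarrow> real) \<Rightarrow> nat \<Rightarrow> real \<Rightarrow> nat \<Rightarrow> real" where
  "pred D R a t i = nthr D R a t (R (dx D i) a)"

definition predicted_pos :: "'x dataset \<Rightarrow> ('x \<Rightarrow> nat \<Rightarrow> real) \<Rightarrow> nat \<Rightarrow> real \<Rightarrow> real" where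
  "predicted_pos D R a t = (\<Sum>i\<in>group_members D a. pred D R a t i)"

definition true_pos :: "'x dataset \<Rightarrow> ('x \<Rightarrow> nat \<Rightarrow> real) \<Rightarrow> nat \<Rightarrow> real \<Rightarrow> real" where
  "true_pos D R a t = (\<Sum>i\<in>positives D a. pred D R a t i)"

text \<open>Missed positives plus false positives of group a, as a share of the whole dataset.\<close>
definition group_loss :: "'x dataset \<Rightarrow> ('x \<Rightarrow> nat \<Rightarrow> real) \<Rightarrow> nat \<Rightarrow> real \<Rightarrow> real" where
  "group_loss D R a t =
     (real (card (positives D a)) + predicted_pos D R a t - 2 * true_pos D R a t) / real (length D)"

definition group_rate :: "bias_kind \<Rightarrow> 'x dataset \<Rightarrow> ('x \<Rightarrow> nat \<Rightarrow> real) \<Rightarrow> nat \<Rightarrow> real \<Rightarrow> real" where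
  "group_rate k D R a t =
     (if k = DemParity then predicted_pos D R a t / real (card (group_members D a))
      else true_pos D R a t / real (card (positives D a)))"

lemma finite_group_members [simp]: "finite (group_members D a)"
  by (simp add: group_members_def)

lemma nthr_antimono: "t \<le> t' \<Longrightarrow> nthr D R a t' s \<le> nthr D R a t s"
  unfolding nthr_def Let_def
  by (intro min.mono max.mono divide_right_mono diff_right_mono mult_right_mono) auto

lemma nthr_bounds: "0 \<le> nthr D R a t s" "nthr D R a t s \<le> 1"
  unfolding nthr_def Let_def by auto

lemma continuous_on_nthr: "continuous_on S (\<lambda>t. nthr D R a t s)"
  unfolding nthr_def Let_def divide_inverse by (intro continuous_intros)

lemma pred_threshold_shape:
  assumes "i \<in> group_members D a" and "R (dx D j) a < R (dx D i) a"
  shows "pred D R a t i = 1 \<or> pred D R a t j = 0"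
proof -
  define above where "above s = card {l. l < length D \<and> da D l = a \<and> s < R (dx D l) a}" for s
  define level where "level s = card {l. l < length D \<and> da D l = a \<and> R (dx D l) a = s}" for s
  define m where "m = (1 - t) * real (grp_size D a)"
  have pred: "pred D R a t l = min 1 (max 0 ((m - above (R (dx D l) a)) / level (R (dx D l) a)))" for l
    by (simp add: pred_def nthr_def above_def level_def m_def)
  have "level (R (dx D i) a) > 0"
    using assms(1) by (auto simp: level_def card_gt_0_iff group_members_def)
  have "above (R (dx D i) a) + level (R (dx D i) a)
      = card ({l. l < length D \<and> da D l = a \<and> R (dx D i) a < R (dx D l) a}
            \<union> {l. l < length D \<and> da D l = a \<and> R (dx D l) a = R (dx D i) a})"
    unfolding above_def level_def by (rule card_Un_disjoint[symmetric]) auto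
  also have "\<dots> \<le> above (R (dx D j) a)"
    unfolding above_def by (rule card_mono) (use assms(2) in auto)
  finally have "above (R (dx D i) a) + level (R (dx D i) a) \<le> above (R (dx D j) a)" .
  then show ?thesis
    using \<open>level (R (dx D i) a) > 0\<close>
    by (cases "real (above (R (dx D i) a) + level (R (dx D i) a)) \<le> m")
      (auto simp: pred field_simps divide_nonpos_nonneg)
qed

lemma gabos_true_pos:
  assumes "gabos D R"
  shows "true_pos D R a t = (\<Sum>i\<in>group_members D a. R (dx D i) a * pred D R a t i)"
proof -
  have "R (dx D i) a = real (card {j \<in> group_members D a. dx D j = dx D i \<and> dy D j = 1})
      / real (card {j \<in> group_members D a. dx D j = dx D i})"
    if "i \<in> group_members D a" for i
  proof -
    have "i < length D" "da D i = a" using that by (simp_all add: group_members_def)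
    moreover have "{j \<in> group_members D a. dx D j = dx D i \<and> dy D j = 1}
        = {j. j < length D \<and> dx D j = dx D i \<and> da D j = a \<and> dy D j = 1}"
      "{j \<in> group_members D a. dx D j = dx D i}
        = {j. j < length D \<and> dx D j = dx D i \<and> da D j = a}"
      by (auto simp: group_members_def)
    ultimately show ?thesis
      using assms[unfolded gabos_def, rule_format, of i] by simp
  qed
  then show ?thesis
    unfolding true_pos_def positives_def pred_def
    by (rule sum_filter_class_average[where h = "\<lambda>x. nthr D R a t (R x a)", OF finite_group_members])
qed

lemma true_pos_concave:
  assumes "gabos D R" and \<theta>: "\<theta> \<in> {0..1}"
    and "predicted_pos D R a t = \<theta> * predicted_pos D R a ta + (1 - \<theta>) * predicted_pos D R a tb"
  shows "\<theta> * true_pos D R a ta + (1 - \<theta>) * true_pos D R a tb \<le> true_pos D R a t"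
proof -
  define z where "z i = \<theta> * pred D R a ta i + (1 - \<theta>) * pred D R a tb i" for i
  have "0 \<le> z i \<and> z i \<le> 1" for i
    using nthr_bounds[of D R a] \<theta>
    by (auto simp: z_def pred_def intro!: convex_bound_le add_nonneg_nonneg mult_nonneg_nonneg)
  moreover have "sum z (group_members D a) = sum (pred D R a t) (group_members D a)"
    using assms(3) by (simp add: z_def predicted_pos_def sum.distrib sum_distrib_left)
  moreover have "pred D R a t i = 1 \<or> pred D R a t j = 0"
    if "i \<in> group_members D a" "R (dx D j) a < R (dx D i) a" for i j
    using that by (rule pred_threshold_shape)
  ultimately have "(\<Sum>i\<in>group_members D a. R (dx D i) a * z i)
      \<le> (\<Sum>i\<in>group_members D a. R (dx D i) a * pred D R a t i)"
    by (intro threshold_maximizes_weighted_sum) auto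
  moreover have "(\<Sum>i\<in>group_members D a. R (dx D i) a * z i)
      = \<theta> * true_pos D R a ta + (1 - \<theta>) * true_pos D R a tb"
    unfolding gabos_true_pos[OF assms(1)]
    by (simp add: z_def distrib_left sum.distrib sum_distrib_left mult.left_commute)
  ultimately show ?thesis
    using gabos_true_pos[OF assms(1)] by simp
qed

lemma antimono_predicted_pos: "antimono (predicted_pos D R a)"
  by (intro antimonoI) (auto simp: predicted_pos_def pred_def intro!: sum_mono nthr_antimono)

lemma antimono_true_pos: "antimono (true_pos D R a)"
  by (intro antimonoI) (auto simp: true_pos_def pred_def intro!: sum_mono nthr_antimono)

lemma antimono_group_rate: "antimono (group_rate k D R a)"
  using antimonoD[OF antimono_predicted_pos] antimonoD[OF antimono_true_pos]
  by (intro antimonoI) (auto simp: group_rate_def intro!: divide_right_mono)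

lemma convex_tradeoff_group:
  assumes "gabos D R"
  shows "convex_tradeoff (group_loss D R a) (group_rate k D R a)"
  unfolding convex_tradeoff_def
proof (intro ballI)
  fix ta tb \<theta> :: real assume ab: "ta \<in> {0..1}" "tb \<in> {0..1}" and \<theta>: "\<theta> \<in> {0..1}"
  let ?Q = "predicted_pos D R a" and ?T = "true_pos D R a"
  have cont: "continuous_on {0..1} ?Q" "continuous_on {0..1} ?T"
    unfolding predicted_pos_def true_pos_def pred_def by (intro continuous_intros continuous_on_nthr)+
  have anti: "antimono_on {0..1} ?Q" "antimono_on {0..1} ?T"
    using monotone_on_subset[OF antimono_predicted_pos subset_UNIV]
      monotone_on_subset[OF antimono_true_pos subset_UNIV] by auto
  have concave: "\<theta> * ?T ta + (1 - \<theta>) * ?T tb \<le> ?T t"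
    if "t \<in> {0..1}" "?Q t = \<theta> * ?Q ta + (1 - \<theta>) * ?Q tb" for t
    by (rule true_pos_concave[OF assms \<theta> that(2)])
  note interpolation = antitone_interpolation[OF cont anti ab \<theta> concave]
  have comb: "\<theta> * (u / n) + (1 - \<theta>) * (v / n) = (\<theta> * u + (1 - \<theta>) * v) / n" for u v n :: real
    by (simp add: add_divide_distrib)
  have loss_le: "group_loss D R a t \<le> \<theta> * group_loss D R a ta + (1 - \<theta>) * group_loss D R a tb"
    if "?Q t \<le> \<theta> * ?Q ta + (1 - \<theta>) * ?Q tb" "\<theta> * ?T ta + (1 - \<theta>) * ?T tb \<le> ?T t" for t
    unfolding group_loss_def comb using that by (intro divide_right_mono) (auto simp: algebra_simps)
  show "\<exists>t\<in>{0..1}. group_rate k D R a t = \<theta> * group_rate k D R a ta + (1 - \<theta>) * group_rate k D R a tb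
      \<and> group_loss D R a t \<le> \<theta> * group_loss D R a ta + (1 - \<theta>) * group_loss D R a tb"
  proof (cases "k = DemParity")
    case True
    obtain t where "t \<in> {0..1}" "?Q t = \<theta> * ?Q ta + (1 - \<theta>) * ?Q tb"
      "\<theta> * ?T ta + (1 - \<theta>) * ?T tb \<le> ?T t"
      using interpolation(1) by blast
    with True show ?thesis
      using loss_le[of t] by (intro bexI[of _ t]) (auto simp: group_rate_def add_divide_distrib)
  next
    case False
    obtain t where "t \<in> {0..1}" "?T t = \<theta> * ?T ta + (1 - \<theta>) * ?T tb"
      "?Q t \<le> \<theta> * ?Q ta + (1 - \<theta>) * ?Q tb"
      using interpolation(2) by blast
    with False show ?thesis
      using loss_le[of t] by (intro bexI[of _ t]) (auto simp: group_rate_def add_divide_distrib)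
  qed
qed

lemma clf_group_member:
  "i \<in> group_members D a \<Longrightarrow>
    clf D R \<tau> (dx D i) (da D i) = pred D R a (if a = 1 then fst \<tau> else snd \<tau>) i"
  by (simp add: clf_def pred_def group_members_def)

lemma group_errors:
  "(\<Sum>i\<in>group_members D a. if dy D i = 1 then 1 - pred D R a t i else pred D R a t i)
    = real (card (positives D a)) + predicted_pos D R a t - 2 * true_pos D R a t"
proof -
  let ?G = "group_members D a" and ?p = "pred D R a t"
  have "(\<Sum>i\<in>?G. if dy D i = 1 then 1 - ?p i else ?p i)
      = (\<Sum>i\<in>?G. (if dy D i = 1 then 1 else 0) + ?p i - 2 * (if dy D i = 1 then ?p i else 0))"
    by (rule sum.cong) auto
  also have "\<dots> = (\<Sum>i\<in>?G. if dy D i = 1 then 1 else 0) + predicted_pos D R a t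
      - 2 * (\<Sum>i\<in>?G. if dy D i = 1 then ?p i else 0)"
    by (simp add: predicted_pos_def sum.distrib sum_subtractf sum_distrib_left)
  also have "(\<Sum>i\<in>?G. if dy D i = 1 then 1 else 0) = real (card (positives D a))"
    by (simp add: positives_def sum.inter_filter[symmetric])
  also have "(\<Sum>i\<in>?G. if dy D i = 1 then ?p i else 0) = true_pos D R a t"
    by (simp add: true_pos_def positives_def sum.inter_filter)
  finally show ?thesis .
qed

lemma loss_split:
  assumes "\<forall>i < length D. da D i \<in> {1, 2}"
  shows "loss D R \<tau> = group_loss D R 1 (fst \<tau>) + group_loss D R 2 (snd \<tau>)"
proof -
  let ?err = "\<lambda>i. let f = clf D R \<tau> (dx D i) (da D i) in if dy D i = 1 then 1 - f else f"
  have "{..<length D} = group_members D 1 \<union> group_members D 2"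
    using assms by (auto simp: group_members_def)
  then have "(\<Sum>i<length D. ?err i) = (\<Sum>i\<in>group_members D 1. ?err i) + (\<Sum>i\<in>group_members D 2. ?err i)"
    by (simp add: sum.union_disjoint disjoint_iff group_members_def)
  also have "(\<Sum>i\<in>group_members D 1. ?err i)
      = (\<Sum>i\<in>group_members D 1. if dy D i = 1 then 1 - pred D R 1 (fst \<tau>) i else pred D R 1 (fst \<tau>) i)"
    by (intro sum.cong) (auto simp: clf_group_member Let_def)
  also have "(\<Sum>i\<in>group_members D 2. ?err i)
      = (\<Sum>i\<in>group_members D 2. if dy D i = 1 then 1 - pred D R 2 (snd \<tau>) i else pred D R 2 (snd \<tau>) i)"
    by (intro sum.cong) (auto simp: clf_group_member Let_def)
  finally have "(\<Sum>i<length D. ?err i)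
      = real (card (positives D 1)) + predicted_pos D R 1 (fst \<tau>) - 2 * true_pos D R 1 (fst \<tau>)
      + (real (card (positives D 2)) + predicted_pos D R 2 (snd \<tau>) - 2 * true_pos D R 2 (snd \<tau>))"
    unfolding group_errors .
  then show ?thesis
    unfolding loss_def group_loss_def by (simp add: add_divide_distrib)
qed

lemma bias_split: "bias k D R \<tau> = group_rate k D R 1 (fst \<tau>) - group_rate k D R 2 (snd \<tau>)"
proof -
  have "(\<Sum>i | i < length D \<and> da D i = a \<and> (k = DemParity \<or> dy D i = 1). clf D R \<tau> (dx D i) (da D i))
      / real (card {i. i < length D \<and> da D i = a \<and> (k = DemParity \<or> dy D i = 1)})
    = group_rate k D R a (if a = 1 then fst \<tau> else snd \<tau>)" for a
  proof -
    have "{i. i < length D \<and> da D i = a \<and> (k = DemParity \<or> dy D i = 1)}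
        = (if k = DemParity then group_members D a else positives D a)"
      by (auto simp: group_members_def positives_def)
    moreover have "positives D a \<subseteq> group_members D a" by (auto simp: positives_def)
    ultimately show ?thesis
      by (auto simp: group_rate_def predicted_pos_def true_pos_def clf_group_member
          intro!: arg_cong2[where f = divide] sum.cong)
  qed
  then show ?thesis by (simp add: bias_def)
qed

theorem theorem3:
  fixes D :: "'x dataset" and R :: "'x \<Rightarrow> nat \<Rightarrow> real" and k :: bias_kind
    and \<beta>1 \<beta>2 \<beta>3 :: real and \<tau>1 \<tau>2 \<tau>3 :: "real \<times> real" and i :: nat
  assumes labels: "\<forall>j < length D. da D j \<in> {1, 2} \<and> dy D j \<in> {0, 1}"
    and groups: "\<forall>a \<in> {1, 2}. \<exists>j < length D. da D j = a \<and> (k = EqOpportunity \<longrightarrow> dy D j = 1)"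
    and "gabos D R"
    and "0 < \<beta>1" and "\<beta>1 < \<beta>2" and "\<beta>2 < \<beta>3"
    and "postproc k D R \<beta>1 \<tau>1" and "postproc k D R \<beta>2 \<tau>2" and "postproc k D R \<beta>3 \<tau>3"
    and "i < length D"
  shows "(clf D R \<tau>1 (dx D i) (da D i) \<le> clf D R \<tau>2 (dx D i) (da D i) \<and>
          clf D R \<tau>2 (dx D i) (da D i) \<le> clf D R \<tau>3 (dx D i) (da D i)) \<or>
         (clf D R \<tau>1 (dx D i) (da D i) \<ge> clf D R \<tau>2 (dx D i) (da D i) \<and>
          clf D R \<tau>2 (dx D i) (da D i) \<ge> clf D R \<tau>3 (dx D i) (da D i))"
proof -
  interpret separable_tradeoff "loss D R" "bias k D R" "group_loss D R 1" "group_loss D R 2"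
    "group_rate k D R 1" "group_rate k D R 2"
    using labels convex_tradeoff_group[OF \<open>gabos D R\<close>]
      monotone_on_subset[OF antimono_group_rate subset_UNIV]
    by unfold_locales (simp_all add: loss_split bias_split)
  have "(fst \<tau>1 \<le> fst \<tau>2 \<and> fst \<tau>2 \<le> fst \<tau>3 \<and> snd \<tau>3 \<le> snd \<tau>2 \<and> snd \<tau>2 \<le> snd \<tau>1) \<or>
        (fst \<tau>3 \<le> fst \<tau>2 \<and> fst \<tau>2 \<le> fst \<tau>1 \<and> snd \<tau>1 \<le> snd \<tau>2 \<and> snd \<tau>2 \<le> snd \<tau>3)"
    using assms(4-9) by (intro lex_select_slack_consistent) (simp_all add: postproc_iff_lex_select)
  moreover have "da D i = 1 \<or> da D i = 2" using labels \<open>i < length D\<close> by auto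
  ultimately show ?thesis unfolding clf_def by (auto intro: nthr_antimono)
qed

end
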